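(* Suppose that, for a given $\lambda >0$, $f(\lambda)$ is $\rho$-accurate, i.e. $|f(\lambda)|\le \rho$, and define \[ C(\{ S_k^\lambda \} _{k = 0}^{N - 1} ) - \gamma = :a \in (-\rho,\rho). \] Then, for the corresponding tuple $\{\lambda, S_k^\lambda,P_k^\lambda,F_k^\lambda\} _{k = 0}^{N - 1}$, $\{S_k^\lambda,F_k^\lambda\} _{k = 0}^{N - 1}$ is an optimal solution of the covariance selection problem with $\gamma$ replaced with $\gamma+ a \in (\gamma- \rho,\gamma + \rho)$.
   Context: Consider the stochastic LTI system $x(k+1)=Ax(k)+Bu(k)+w(k)$ with $x(k)\in\mathbb R^n$, $u(k)\in\mathbb R^m$, $x(0)\sim\mathcal N(z,V)$, $w(k)\sim\mathcal N(0,W)$ mutually independent, and linear feedback $u(k)=F_kx(k)$, $k\in\{0,\dots,N-1\}$. With $S_k=\mathbb E([x(k);u(k)][x(k);u(k)]^T)$, the covariance selection problem is: minimize $J_p(\{S_k\})=\mathrm{Tr}\big(Q_f([A\ B]S_{N-1}[A\ B]^T+W)\big)+\sum_{k=0}^{N-1}\mathrm{Tr}(\mathrm{diag}(Q_k,R_k)S_k)$ over $\{S_k,F_k\}$ subject to $S_k=\Phi(F_k,S_{k-1})$ ($k=1,\dots,N-1$), $S_0=[I_n;F_0](V+zz^T)[I_n;F_0]^T$, and $C(\{S_k\})\le\gamma$, where $C(\{S_k\})=\mathrm{Tr}\big(\tilde Q_f([A\ B]S_{N-1}[A\ B]^T+W)\big)+\sum_{k=0}^{N-1}\mathrm{Tr}(\mathrm{diag}(\tilde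 Q_k,\tilde R_k)S_k)$ and $\Phi(F,S)=[I_n;F]([A\ B]S[A\ B]^T+W)[I_n;F]^T$. Assumptions: $Q_f,\tilde Q_f,Q_k,\tilde Q_k\succeq0$, $R_k+\lambda\tilde R_k\succ0$ for all $k$, $\lambda>0$; $V\succ0$, $W\succ0$; strict feasibility of the inequality constraint. For $\lambda\ge0$, $X_N^\lambda=Q_f+\lambda\tilde Q_f$, $X_k^\lambda=A^TX_{k+1}^\lambda A-A^TX_{k+1}^\lambda B(R_k+\lambda\tilde R_k+B^TX_{k+1}^\lambda B)^{-1}B^TX_{k+1}^\lambda A+Q_k+\lambda\tilde Q_k$, $F_k^\lambda=-(R_k+\lambda\tilde R_k+B^TX_{k+1}^\lambda B)^{-1}B^TX_{k+1}^\lambda A$, $S_0^\lambda=[I;F_0^\lambda](V+zz^T)[I;F_0^\lambda]^T$, $S_k^\lambda=\Phi(F_k^\lambda,S_{k-1}^\lambda)$, $P_k^\lambda=\begin{bmatrix}Q_k+\lambda\tilde Q_k+A^TX_{k+1}^\lambda A & A^TX_{k+1}^\lambda B\\ B^TX_{k+1}^\lambda A & R_k+\lambda\tilde R_k+B^TX_{k+1}^\lambda B\end{bmatrix}$, and $f(\lambda)=C(\{S_k^\lambda\}_{k=0}^{N-1})-\gamma$. It was shown that for any $\lambda>0$ with $C(\{S_k^\lambda\})$ equal to the constraint level, $\{(S_k^\lambda,F_k^\lambda)\}$ is optimal for the problem with that constraint level. The setting is that $\lambda$ is obtained approximately by a bisection search on $f$, so $f(\lambda)=0$ holds only up to finite precision.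 *)

theory Defs
  imports "HOL-Analysis.Analysis"
begin

definition psd :: "real^'n^'n \<Rightarrow> bool" where
  "psd M \<longleftrightarrow> transpose M = M \<and> (\<forall>x. 0 \<le> x \<bullet> (M *v x))"

definition pd :: "real^'n^'n \<Rightarrow> bool" where
  "pd M \<longleftrightarrow> transpose M = M \<and> (\<forall>x. x \<noteq> 0 \<longrightarrow> 0 < x \<bullet> (M *v x))"

text \<open>Block matrices. The stacked vector [x;u] lives in real^('n + 'm).\<close>
definition blkAB :: "real^'n^'n \<Rightarrow> real^'m^'n \<Rightarrow> real^('n + 'm)^'n" where
  "blkAB A B = (\<chi> i j. case j of Inl a \<Rightarrow> A $ i $ a | Inr b \<Rightarrow> B $ i $ b)"

definition stackIF :: "real^'n^'m \<Rightarrow> real^'n^('n + 'm)" where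
  "stackIF F = (\<chi> i j. case i of Inl a \<Rightarrow> (mat 1 :: real^'n^'n) $ a $ j | Inr b \<Rightarrow> F $ b $ j)"

definition diagblk :: "real^'n^'n \<Rightarrow> real^'m^'m \<Rightarrow> real^('n + 'm)^('n + 'm)" where
  "diagblk Q R = (\<chi> i j. case (i, j) of (Inl a, Inl b) \<Rightarrow> Q $ a $ b
                                       | (Inr a, Inr b) \<Rightarrow> R $ a $ b
                                       | _ \<Rightarrow> 0)"

definition outer :: "real^'n \<Rightarrow> real^'n^'n" where
  "outer z = (\<chi> i j. z $ i * z $ j)"

definition Phi :: "real^'n^'n \<Rightarrow> real^'m^'n \<Rightarrow> real^'n^'n \<Rightarrow> real^'n^'m
                   \<Rightarrow> real^('n + 'm)^('n + 'm) \<Rightarrow> real^('n + 'm)^('n + 'm)" where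
  "Phi A B W F S = stackIF F ** (blkAB A B ** S ** transpose (blkAB A B) + W) ** transpose (stackIF F)"

text \<open>Generic quadratic cost: Tr(Qf([A B] S_{N-1} [A B]^T + W)) + sum_{k<N} Tr(diag(Q_k,R_k) S_k).
  Used both for J_p (with Q_f, Q_k, R_k) and for C (with the tilde matrices).\<close>
definition cost :: "real^'n^'n \<Rightarrow> real^'m^'n \<Rightarrow> real^'n^'n \<Rightarrow> nat
                    \<Rightarrow> real^'n^'n \<Rightarrow> (nat \<Rightarrow> real^'n^'n) \<Rightarrow> (nat \<Rightarrow> real^'m^'m)
                    \<Rightarrow> (nat \<Rightarrow> real^('n + 'm)^('n + 'm)) \<Rightarrow> real" where
  "cost A B W N Qf Q R S =
     trace (Qf ** (blkAB A B ** S (N - 1) ** transpose (blkAB A B) + W))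
     + (\<Sum>k<N. trace (diagblk (Q k) (R k) ** S k))"

definition dyn_feasible :: "real^'n^'n \<Rightarrow> real^'m^'n \<Rightarrow> real^'n^'n \<Rightarrow> real^'n^'n \<Rightarrow> real^'n \<Rightarrow> nat
      \<Rightarrow> (nat \<Rightarrow> real^('n + 'm)^('n + 'm)) \<Rightarrow> (nat \<Rightarrow> real^'n^'m) \<Rightarrow> bool" where
  "dyn_feasible A B W V z N S F \<longleftrightarrow>
     S 0 = stackIF (F 0) ** (V + outer z) ** transpose (stackIF (F 0)) \<and>
     (\<forall>k. 1 \<le> k \<and> k < N \<longrightarrow> S k = Phi A B W (F k) (S (k - 1)))"

definition cov_optimal :: "real^'n^'n \<Rightarrow> real^'m^'n \<Rightarrow> real^'n^'n \<Rightarrow> real^'n^'n \<Rightarrow> real^'n \<Rightarrow> nat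
      \<Rightarrow> real^'n^'n \<Rightarrow> (nat \<Rightarrow> real^'n^'n) \<Rightarrow> (nat \<Rightarrow> real^'m^'m)
      \<Rightarrow> real^'n^'n \<Rightarrow> (nat \<Rightarrow> real^'n^'n) \<Rightarrow> (nat \<Rightarrow> real^'m^'m) \<Rightarrow> real
      \<Rightarrow> (nat \<Rightarrow> real^('n + 'm)^('n + 'm)) \<Rightarrow> (nat \<Rightarrow> real^'n^'m) \<Rightarrow> bool" where
  "cov_optimal A B W V z N Qf Q R Qft Qt Rt g S F \<longleftrightarrow>
     dyn_feasible A B W V z N S F \<and> cost A B W N Qft Qt Rt S \<le> g \<and>
     (\<forall>S' F'. dyn_feasible A B W V z N S' F' \<and> cost A B W N Qft Qt Rt S' \<le> g
        \<longrightarrow> cost A B W N Qf Q R S \<le> cost A B W N Qf Q R S')"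

text \<open>Riccati recursion, indexed backwards: riccX_rev j = X_{N-j}.
  Here Qf, Q, R are already the combined weights (Q_f + lam Qt_f etc.).\<close>
fun riccX_rev :: "real^'n^'n \<Rightarrow> real^'m^'n \<Rightarrow> nat \<Rightarrow> real^'n^'n \<Rightarrow> (nat \<Rightarrow> real^'n^'n)
                  \<Rightarrow> (nat \<Rightarrow> real^'m^'m) \<Rightarrow> nat \<Rightarrow> real^'n^'n" where
  "riccX_rev A B N Qf Q R 0 = Qf"
| "riccX_rev A B N Qf Q R (Suc j) =
     (let X = riccX_rev A B N Qf Q R j; k = N - Suc j in
       transpose A ** X ** A
       - transpose A ** X ** B ** matrix_inv (R k + transpose B ** X ** B) ** transpose B ** X ** A
       + Q k)"

definition riccX :: "real^'n^'n \<Rightarrow> real^'m^'n \<Rightarrow> nat \<Rightarrow> real^'n^'n \<Rightarrow> (nat \<Rightarrow> real^'n^'n)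
                  \<Rightarrow> (nat \<Rightarrow> real^'m^'m) \<Rightarrow> nat \<Rightarrow> real^'n^'n" where
  "riccX A B N Qf Q R k = riccX_rev A B N Qf Q R (N - k)"

definition Xlam where
  "Xlam A B N Qf Q R Qft Qt Rt lam k =
     riccX A B N (Qf + lam *\<^sub>R Qft) (\<lambda>i. Q i + lam *\<^sub>R Qt i) (\<lambda>i. R i + lam *\<^sub>R Rt i) k"

definition Flam :: "real^'n^'n \<Rightarrow> real^'m^'n \<Rightarrow> nat \<Rightarrow> real^'n^'n \<Rightarrow> (nat \<Rightarrow> real^'n^'n)
     \<Rightarrow> (nat \<Rightarrow> real^'m^'m) \<Rightarrow> real^'n^'n \<Rightarrow> (nat \<Rightarrow> real^'n^'n) \<Rightarrow> (nat \<Rightarrow> real^'m^'m)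
     \<Rightarrow> real \<Rightarrow> nat \<Rightarrow> real^'n^'m" where
  "Flam A B N Qf Q R Qft Qt Rt lam k =
     (let X = Xlam A B N Qf Q R Qft Qt Rt lam (Suc k) in
      - (matrix_inv (R k + lam *\<^sub>R Rt k + transpose B ** X ** B) ** transpose B ** X ** A))"

fun Slam :: "real^'n^'n \<Rightarrow> real^'m^'n \<Rightarrow> real^'n^'n \<Rightarrow> real^'n^'n \<Rightarrow> real^'n \<Rightarrow> nat
     \<Rightarrow> real^'n^'n \<Rightarrow> (nat \<Rightarrow> real^'n^'n) \<Rightarrow> (nat \<Rightarrow> real^'m^'m)
     \<Rightarrow> real^'n^'n \<Rightarrow> (nat \<Rightarrow> real^'n^'n) \<Rightarrow> (nat \<Rightarrow> real^'m^'m)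
     \<Rightarrow> real \<Rightarrow> nat \<Rightarrow> real^('n + 'm)^('n + 'm)" where
  "Slam A B W V z N Qf Q R Qft Qt Rt lam 0 =
     (let F0 = Flam A B N Qf Q R Qft Qt Rt lam 0 in
      stackIF F0 ** (V + outer z) ** transpose (stackIF F0))"
| "Slam A B W V z N Qf Q R Qft Qt Rt lam (Suc k) =
     Phi A B W (Flam A B N Qf Q R Qft Qt Rt lam (Suc k)) (Slam A B W V z N Qf Q R Qft Qt Rt lam k)"

end

theory Submission
  imports Defs
begin

text \<open>
  For a multiplier \<open>\<lambda> \<ge> 0\<close> the Lagrangian \<open>J\<^sub>p + \<lambda> C\<close> is itself a finite-horizon LQ
  cost, with weights \<open>Qf + \<lambda> Qft\<close>, \<open>Q k + \<lambda> Qt k\<close>, \<open>R k + \<lambda> Rt k\<close>. Let \<open>\<Sigma>\<^sub>k\<close> be the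
  second moment of \<open>x(k)\<close>, so that \<open>S\<^sub>k = [I;F\<^sub>k] \<Sigma>\<^sub>k [I;F\<^sub>k]\<^sup>T\<close>. Completing the square
  with the Riccati solution \<open>X\<^sup>\<lambda>\<close> writes the Lagrangian of any feasible \<open>(S, F)\<close> as a
  term independent of \<open>F\<close> plus \<open>\<Sum>\<^sub>k Tr((F\<^sub>k - F\<^sub>k\<^sup>\<lambda>)\<^sup>T G\<^sub>k (F\<^sub>k - F\<^sub>k\<^sup>\<lambda>) \<Sigma>\<^sub>k)\<close>, where
  \<open>G\<^sub>k = R k + \<lambda> Rt k + B\<^sup>T X\<^sub>k\<^sub>+\<^sub>1\<^sup>\<lambda> B\<close> is positive definite. The trace of a product
  of two positive semidefinite matrices is nonnegative, so \<open>F\<^sup>\<lambda>\<close> minimises the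
  Lagrangian, and a Lagrangian minimiser is optimal for the constraint level it attains
  itself, which is \<open>\<gamma> + a\<close>.
\<close>

section \<open>Matrix algebra\<close>

lemma transpose_add: "transpose (A + B) = transpose A + transpose (B :: 'a::ring_1^'n^'m)"
  by (simp add: transpose_def vec_eq_iff)

lemma transpose_diff: "transpose (A - B) = transpose A - transpose (B :: 'a::ring_1^'n^'m)"
  by (simp add: transpose_def vec_eq_iff)

lemma transpose_uminus: "transpose (- A) = - transpose (A :: 'a::ring_1^'n^'m)"
  by (simp add: transpose_def vec_eq_iff)

lemma matrix_add_rdistrib: "(A + B) ** C = A ** C + B ** (C :: 'a::ring_1^'k^'n)"
  by (simp add: matrix_matrix_mult_def vec_eq_iff sum.distrib distrib_right)

lemma matrix_diff_ldistrib: "A ** (B - C) = A ** B - A ** (C :: 'a::ring_1^'k^'n)"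
  by (simp add: matrix_matrix_mult_def vec_eq_iff sum_subtractf right_diff_distrib)

lemma matrix_diff_rdistrib: "(A - B) ** C = A ** C - B ** (C :: 'a::ring_1^'k^'n)"
  by (simp add: matrix_matrix_mult_def vec_eq_iff sum_subtractf left_diff_distrib)

lemma matrix_uminus_left: "(- A) ** B = - (A ** (B :: 'a::ring_1^'k^'n))"
  by (simp add: matrix_matrix_mult_def vec_eq_iff sum_negf)

lemma matrix_uminus_right: "A ** (- B) = - (A ** (B :: 'a::ring_1^'k^'n))"
  by (simp add: matrix_matrix_mult_def vec_eq_iff sum_negf)

lemmas matrix_ring_simps = matrix_add_ldistrib matrix_add_rdistrib matrix_diff_ldistrib
  matrix_diff_rdistrib matrix_uminus_left matrix_uminus_right matrix_transpose_mul
  transpose_add transpose_diff transpose_uminus matrix_mul_assoc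

lemma transpose_symmetric_entry: "transpose M = M \<Longrightarrow> M $ i $ j = M $ j $ i"
  by (metis transpose_def vec_lambda_beta)

lemma matrix_inv_right: "invertible A \<Longrightarrow> A ** matrix_inv A = mat 1"
  unfolding invertible_def matrix_inv_def by (rule someI2_ex) auto

lemma matrix_inv_left: "invertible A \<Longrightarrow> matrix_inv A ** A = mat 1"
  unfolding invertible_def matrix_inv_def by (rule someI2_ex) auto

lemma transpose_matrix_inv_symmetric:
  fixes A :: "'a::comm_ring_1^'n^'n"
  assumes "invertible A" "transpose A = A"
  shows "transpose (matrix_inv A) = matrix_inv A"
proof -
  have "transpose (matrix_inv A) = transpose (matrix_inv A) ** (A ** matrix_inv A)"
    using matrix_inv_right[OF assms(1)] by simp
  also have "\<dots> = transpose (transpose A ** matrix_inv A) ** matrix_inv A"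
    by (simp add: matrix_transpose_mul matrix_mul_assoc)
  finally show ?thesis
    using matrix_inv_right[OF assms(1)] assms(2) by simp
qed

section \<open>Positive semidefinite matrices\<close>

lemma pd_imp_psd: "pd M \<Longrightarrow> psd M"
  unfolding pd_def psd_def by (metis inner_zero_left order.refl less_imp_le)

lemma psd_add: "psd M \<Longrightarrow> psd N \<Longrightarrow> psd (M + N)"
  unfolding psd_def by (simp add: transpose_add matrix_vector_mult_add_rdistrib inner_add_right)

lemma pd_add_psd: "pd M \<Longrightarrow> psd N \<Longrightarrow> pd (M + N)"
  unfolding psd_def pd_def
  by (simp add: transpose_add matrix_vector_mult_add_rdistrib inner_add_right add_pos_nonneg)

lemma scaleR_matrix_vector_mult: "(c *\<^sub>R M) *v x = c *\<^sub>R (M *v (x :: real^'n))"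
  by (simp add: matrix_vector_mult_def vec_eq_iff sum_distrib_left mult_ac)

lemma psd_scaleR: "psd M \<Longrightarrow> 0 \<le> c \<Longrightarrow> psd (c *\<^sub>R M)"
  unfolding psd_def by (simp add: transpose_scalar scaleR_matrix_vector_mult)

lemma psd_congruence:
  fixes C :: "real^'m^'n"
  assumes "psd M"
  shows "psd (transpose C ** M ** C)"
  unfolding psd_def
proof (intro conjI allI)
  show "transpose (transpose C ** M ** C) = transpose C ** M ** C"
    using assms by (simp add: psd_def matrix_transpose_mul matrix_mul_assoc)
  fix x
  have "x \<bullet> ((transpose C ** M ** C) *v x) = x \<bullet> ((M *v (C *v x)) v* C)"
    by (simp add: matrix_vector_mul_assoc[symmetric])
  also have "\<dots> = (C *v x) \<bullet> (M *v (C *v x))"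
    by (metis dot_lmul_matrix inner_commute)
  finally have "x \<bullet> ((transpose C ** M ** C) *v x) = (C *v x) \<bullet> (M *v (C *v x))" .
  then show "0 \<le> x \<bullet> ((transpose C ** M ** C) *v x)"
    using assms by (simp add: psd_def)
qed

lemma outer_matrix_vector_mult: "outer z *v x = (z \<bullet> x) *\<^sub>R z"
  by (simp add: outer_def matrix_vector_mult_def inner_vec_def vec_eq_iff sum_distrib_left
      sum_distrib_right mult_ac)

lemma psd_outer: "psd (outer z)"
  unfolding psd_def
proof (intro conjI allI)
  show "transpose (outer z) = outer z"
    by (simp add: transpose_def outer_def vec_eq_iff mult.commute)
  show "0 \<le> x \<bullet> (outer z *v x)" for x
    by (simp add: outer_matrix_vector_mult inner_commute)
qed

lemma pd_invertible:
  assumes "pd (G :: real^'n^'n)"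
  shows "invertible G"
proof -
  have "G *v x = 0 \<Longrightarrow> x = 0" for x
    using assms unfolding pd_def by (metis inner_zero_right less_irrefl)
  then show ?thesis
    by (simp add: invertible_left_inverse matrix_left_invertible_ker)
qed

lemma quadratic_form_diff:
  fixes M :: "real^'n^'n"
  assumes "transpose M = M"
  shows "(x - t *\<^sub>R y) \<bullet> (M *v (x - t *\<^sub>R y))
       = x \<bullet> (M *v x) - 2 * t * (y \<bullet> (M *v x)) + t\<^sup>2 * (y \<bullet> (M *v y))"
proof -
  have "x \<bullet> (M *v y) = y \<bullet> (M *v x)"
    by (metis assms dot_lmul_matrix inner_commute vector_transpose_matrix)
  then show ?thesis
    by (simp add: matrix_vector_mult_diff_distrib matrix_vector_mult_scaleR inner_diff_left
        inner_diff_right power2_eq_square algebra_simps)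
qed

lemma inner_axis_matrix_vector_mult_axis: "axis i 1 \<bullet> (M *v axis j (1::real)) = M $ i $ j"
proof -
  have "(M *v axis j 1) $ i = M $ i $ j"
    by (simp add: matrix_vector_mult_def axis_def if_distrib cong: if_cong)
  then show ?thesis by (simp add: inner_axis')
qed

lemma psd_diag_nonneg: "psd M \<Longrightarrow> 0 \<le> M $ p $ p"
  by (metis psd_def inner_axis_matrix_vector_mult_axis)

lemma psd_zero_diag_imp_zero_row:
  fixes M :: "real^'n^'n"
  assumes "psd M" "M $ p $ p = 0"
  shows "M $ p = 0"
proof (rule ccontr)
  assume "M $ p \<noteq> 0"
  then obtain j where ne: "M $ p $ j \<noteq> 0" by (auto simp: vec_eq_iff)
  define t where "t = (M $ j $ j + 1) / (2 * M $ p $ j)"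
  have "0 \<le> (axis j 1 - t *\<^sub>R axis p 1) \<bullet> (M *v (axis j 1 - t *\<^sub>R axis p 1))"
    using assms unfolding psd_def by blast
  also have "\<dots> = M $ j $ j - 2 * t * M $ p $ j + t\<^sup>2 * M $ p $ p"
    using assms(1) unfolding psd_def
    by (simp add: quadratic_form_diff inner_axis_matrix_vector_mult_axis)
  also have "\<dots> = -1"
    using ne assms(2) by (simp add: t_def field_simps)
  finally show False by simp
qed

lemma psd_schur_complement:
  fixes S :: "real^'n^'n"
  assumes S: "psd S" and c: "0 < S $ p $ p"
  shows "psd (S - (1 / S $ p $ p) *\<^sub>R outer (S $ p))"
  unfolding psd_def
proof (intro conjI allI)
  have sym: "transpose S = S" using S unfolding psd_def by simp
  show "transpose (S - (1 / S $ p $ p) *\<^sub>R outer (S $ p))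
      = S - (1 / S $ p $ p) *\<^sub>R outer (S $ p)"
    using sym by (simp add: transpose_diff transpose_scalar transpose_def outer_def vec_eq_iff
        mult.commute)
  fix x
  define t where "t = (S $ p \<bullet> x) / S $ p $ p"
  have Sx: "axis p 1 \<bullet> (S *v x) = S $ p \<bullet> x"
    by (simp add: inner_axis' matrix_vector_mul_component)
  have "0 \<le> (x - t *\<^sub>R axis p 1) \<bullet> (S *v (x - t *\<^sub>R axis p 1))"
    using S unfolding psd_def by blast
  also have "\<dots> = x \<bullet> (S *v x) - (S $ p \<bullet> x)\<^sup>2 / S $ p $ p"
    using c by (simp add: quadratic_form_diff[OF sym] inner_axis_matrix_vector_mult_axis Sx t_def
        power2_eq_square field_simps)
  also have "\<dots> = x \<bullet> ((S - (1 / S $ p $ p) *\<^sub>R outer (S $ p)) *v x)"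
    by (simp add: matrix_vector_mult_diff_rdistrib inner_diff_right outer_matrix_vector_mult
        power2_eq_square inner_commute scaleR_matrix_vector_mult)
  finally show "0 \<le> x \<bullet> ((S - (1 / S $ p $ p) *\<^sub>R outer (S $ p)) *v x)" .
qed

lemma trace_scaleR: "trace (c *\<^sub>R M) = c * trace (M :: real^'n^'n)"
  by (simp add: trace_def sum_distrib_left)

lemma trace_mult_outer: "trace (D ** outer v) = v \<bullet> (D *v v)"
  by (simp add: trace_def matrix_matrix_mult_def outer_def inner_vec_def matrix_vector_mult_def
      sum_distrib_left mult_ac)

lemma trace_psd_mult_nonneg_rows_in:
  fixes D S :: "real^'n^'n"
  assumes D: "psd D" and "finite I" and "psd S" and "\<And>i. i \<notin> I \<Longrightarrow> S $ i = 0"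
  shows "0 \<le> trace (D ** S)"
  using assms(2-)
proof (induction I arbitrary: S rule: finite_induct)
  case empty
  then have "S = 0" by (simp add: vec_eq_iff)
  then show ?case by (simp add: trace_def)
next
  case (insert p I)
  have sym: "S $ i $ j = S $ j $ i" for i j
    using insert.prems(1) unfolding psd_def by (metis transpose_symmetric_entry)
  show ?case
  proof (cases "S $ p $ p = 0")
    case True
    then have "S $ p = 0" by (rule psd_zero_diag_imp_zero_row[OF insert.prems(1)])
    then show ?thesis using insert by (metis insert_iff)
  next
    case False
    \<comment> \<open>One Cholesky step: split off the rank-one part of \<open>S\<close> carried by row \<open>p\<close>.\<close>
    define c where "c = S $ p $ p"
    define S' where "S' = S - (1 / c) *\<^sub>R outer (S $ p)"
    have c: "0 < c"
      using False psd_diag_nonneg[OF insert.prems(1), of p] by (simp add: c_def)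
    have "psd S'"
      using psd_schur_complement[OF insert.prems(1), of p] c by (simp add: S'_def c_def)
    moreover have "S' $ i = 0" if "i \<notin> I" for i
    proof (cases "i = p")
      case True
      then show ?thesis using c by (simp add: S'_def c_def outer_def vec_eq_iff sym)
    next
      case False
      then have "S $ i = 0" using that insert.prems(2) by simp
      then show ?thesis by (simp add: S'_def outer_def vec_eq_iff sym[of p])
    qed
    ultimately have "0 \<le> trace (D ** S')" by (rule insert.IH)
    moreover have "0 \<le> (1 / c) * (S $ p \<bullet> (D *v S $ p))"
      using D c unfolding psd_def by simp
    moreover have "trace (D ** S) = (1 / c) * (S $ p \<bullet> (D *v S $ p)) + trace (D ** S')"
      by (simp add: S'_def matrix_diff_ldistrib trace_sub matrix_scalar_ac
          scalar_matrix_assoc[symmetric] trace_scaleR trace_mult_outer)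
    ultimately show ?thesis by linarith
  qed
qed

lemma trace_psd_mult_nonneg: "psd D \<Longrightarrow> psd S \<Longrightarrow> 0 \<le> trace (D ** S)"
  by (rule trace_psd_mult_nonneg_rows_in[of D UNIV]) auto

section \<open>Block matrices\<close>

definition vstack :: "'a^'k^'n \<Rightarrow> 'a^'k^'m \<Rightarrow> 'a^'k^('n + 'm)" where
  "vstack M N = (\<chi> i j. case i of Inl a \<Rightarrow> M $ a $ j | Inr b \<Rightarrow> N $ b $ j)"

lemma sum_UNIV_sum:
  fixes f :: "'a::finite + 'b::finite \<Rightarrow> 'c::comm_monoid_add"
  shows "(\<Sum>x\<in>UNIV. f x) = (\<Sum>a\<in>UNIV. f (Inl a)) + (\<Sum>b\<in>UNIV. f (Inr b))"
  by (subst UNIV_Plus_UNIV[symmetric], subst sum.Plus) (simp_all add: comp_def)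

lemma stackIF_eq_vstack: "stackIF F = vstack (mat 1) F"
  by (simp add: stackIF_def vstack_def)

lemma blkAB_eq_transpose_vstack: "blkAB A B = transpose (vstack (transpose A) (transpose B))"
  by (simp add: blkAB_def vstack_def transpose_def vec_eq_iff split: sum.split)

lemma transpose_vstack_mult_vstack:
  "transpose (vstack M N) ** vstack M' N' = transpose M ** M' + transpose N ** (N' :: 'a::comm_semiring_1^_^_)"
  by (simp add: vstack_def transpose_def matrix_matrix_mult_def vec_eq_iff sum_UNIV_sum)

lemma diagblk_mult_vstack: "diagblk Q R ** vstack M N = vstack (Q ** M) (R ** N)"
  by (simp add: diagblk_def vstack_def matrix_matrix_mult_def vec_eq_iff sum_UNIV_sum
      split: sum.split)

lemma blkAB_mult_stackIF: "blkAB A B ** stackIF F = A + B ** F"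
  by (simp add: blkAB_eq_transpose_vstack stackIF_eq_vstack transpose_vstack_mult_vstack)

lemma stackIF_congruence:
  "transpose (stackIF F) ** (diagblk Q R + transpose (blkAB A B) ** X ** blkAB A B) ** stackIF F
   = Q + transpose F ** R ** F + transpose (A + B ** F) ** X ** (A + B ** F)"
proof -
  have "transpose (stackIF F) ** (diagblk Q R + transpose (blkAB A B) ** X ** blkAB A B) ** stackIF F
     = transpose (stackIF F) ** (diagblk Q R ** stackIF F)
       + transpose (blkAB A B ** stackIF F) ** X ** (blkAB A B ** stackIF F)"
    by (simp add: matrix_ring_simps)
  also have "\<dots> = Q + transpose F ** R ** F + transpose (A + B ** F) ** X ** (A + B ** F)"
    by (simp only: blkAB_mult_stackIF)
      (simp add: stackIF_eq_vstack diagblk_mult_vstack transpose_vstack_mult_vstack matrix_mul_assoc)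
  finally show ?thesis .
qed

section \<open>Riccati recursion and completion of squares\<close>

lemma riccati_completion_of_squares:
  fixes A :: "real^'n^'n" and B :: "real^'m^'n" and X Q :: "real^'n^'n"
    and R G :: "real^'m^'m" and F K :: "real^'n^'m"
  assumes G: "G = R + transpose B ** X ** B" and inv: "invertible G"
    and G_sym: "transpose G = G" and X_sym: "transpose X = X"
    and K: "K = - (matrix_inv G ** transpose B ** X ** A)"
  shows "Q + transpose F ** R ** F + transpose (A + B ** F) ** X ** (A + B ** F)
       = (transpose A ** X ** A - transpose A ** X ** B ** matrix_inv G ** transpose B ** X ** A + Q)
         + transpose (F - K) ** G ** (F - K)"
proof -
  have cancel_right: "M ** G ** matrix_inv G = M" for M :: "real^'m^'k"
    by (metis matrix_inv_right[OF inv] matrix_mul_assoc matrix_mul_rid)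
  have cancel_left: "M ** matrix_inv G ** G = M" for M :: "real^'m^'k"
    by (metis matrix_inv_left[OF inv] matrix_mul_assoc matrix_mul_rid)
  have square: "transpose (F - K) ** G ** (F - K)
     = transpose F ** G ** F + transpose F ** transpose B ** X ** A + transpose A ** X ** B ** F
       + transpose A ** X ** B ** matrix_inv G ** transpose B ** X ** A"
    by (simp add: K matrix_ring_simps X_sym transpose_matrix_inv_symmetric[OF inv G_sym]
        cancel_right cancel_left)
  show ?thesis
    unfolding square by (simp add: G matrix_ring_simps X_sym algebra_simps)
qed

definition riccG :: "real^'n^'n \<Rightarrow> real^'m^'n \<Rightarrow> nat \<Rightarrow> real^'n^'n \<Rightarrow> (nat \<Rightarrow> real^'n^'n)
    \<Rightarrow> (nat \<Rightarrow> real^'m^'m) \<Rightarrow> nat \<Rightarrow> real^'m^'m" where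
  "riccG A B N Qf Q R k = R k + transpose B ** riccX A B N Qf Q R (Suc k) ** B"

definition riccF :: "real^'n^'n \<Rightarrow> real^'m^'n \<Rightarrow> nat \<Rightarrow> real^'n^'n \<Rightarrow> (nat \<Rightarrow> real^'n^'n)
    \<Rightarrow> (nat \<Rightarrow> real^'m^'m) \<Rightarrow> nat \<Rightarrow> real^'n^'m" where
  "riccF A B N Qf Q R k =
     - (matrix_inv (riccG A B N Qf Q R k) ** transpose B ** riccX A B N Qf Q R (Suc k) ** A)"

lemma riccX_terminal: "riccX A B N Qf Q R N = Qf"
  by (simp add: riccX_def)

lemma riccX_step:
  assumes "k < N"
  shows "riccX A B N Qf Q R k =
    transpose A ** riccX A B N Qf Q R (Suc k) ** A
    - transpose A ** riccX A B N Qf Q R (Suc k) ** B ** matrix_inv (riccG A B N Qf Q R k)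
      ** transpose B ** riccX A B N Qf Q R (Suc k) ** A
    + Q k"
proof -
  have "N - k = Suc (N - Suc k)" and "N - Suc (N - Suc k) = k"
    using assms by simp_all
  then show ?thesis by (simp add: riccX_def riccG_def Let_def)
qed

lemma riccX_psd:
  assumes Qf: "psd Qf" and Q: "\<forall>k<N. psd (Q k)" and R: "\<forall>k<N. pd (R k)"
  shows "k \<le> N \<Longrightarrow> psd (riccX A B N Qf Q R k)"
proof (induction "N - k" arbitrary: k)
  case 0
  then show ?case using Qf by (simp add: riccX_terminal)
next
  case (Suc j)
  then have k: "k < N" by simp
  let ?X = "riccX A B N Qf Q R (Suc k)" and ?G = "riccG A B N Qf Q R k"
    and ?F = "riccF A B N Qf Q R k"
  have X: "psd ?X" using Suc k by simp
  then have G: "pd ?G" using R k by (simp add: riccG_def pd_add_psd psd_congruence)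
  \<comment> \<open>With the optimal gain the square term vanishes, exhibiting \<open>X\<^sub>k\<close> as a sum of congruences.\<close>
  have "riccX A B N Qf Q R k
      = Q k + transpose ?F ** R k ** ?F + transpose (A + B ** ?F) ** ?X ** (A + B ** ?F)"
    using riccati_completion_of_squares[OF riccG_def pd_invertible[OF G],
        where Q = "Q k" and F = ?F and K = ?F]
      G X unfolding pd_def psd_def
    by (simp add: riccX_step[OF k] riccF_def)
  moreover have "psd (Q k + transpose ?F ** R k ** ?F + transpose (A + B ** ?F) ** ?X ** (A + B ** ?F))"
    using Q R k X by (intro psd_add psd_congruence) (auto intro: pd_imp_psd)
  ultimately show ?case by simp
qed

lemma riccG_pd:
  assumes "psd Qf" and "\<forall>k<N. psd (Q k)" and R: "\<forall>k<N. pd (R k)" and k: "k < N"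
  shows "pd (riccG A B N Qf Q R k)"
  using riccX_psd[OF assms(1,2) R, of "Suc k"] R k
  by (simp add: riccG_def pd_add_psd psd_congruence)

text \<open>\<open>state_moment \<dots> S k\<close> is the second moment \<open>\<Sigma>\<^sub>k = E(x(k) x(k)\<^sup>T)\<close> of the state.\<close>

fun state_moment :: "real^'n^'n \<Rightarrow> real^'m^'n \<Rightarrow> real^'n^'n \<Rightarrow> real^'n^'n \<Rightarrow> real^'n
    \<Rightarrow> (nat \<Rightarrow> real^('n + 'm)^('n + 'm)) \<Rightarrow> nat \<Rightarrow> real^'n^'n" where
  "state_moment A B W V z S 0 = V + outer z"
| "state_moment A B W V z S (Suc k) = blkAB A B ** S k ** transpose (blkAB A B) + W"

lemma dyn_feasible_factor:
  assumes "dyn_feasible A B W V z N S F" and "k < N"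
  shows "S k = stackIF (F k) ** state_moment A B W V z S k ** transpose (stackIF (F k))"
  using assms unfolding dyn_feasible_def Phi_def by (cases k) auto

lemma state_moment_psd:
  assumes feas: "dyn_feasible A B W V z N S F" and V: "psd V" and W: "psd W"
  shows "k \<le> N \<Longrightarrow> psd (state_moment A B W V z S k)"
proof (induction k)
  case 0
  then show ?case using V by (simp add: psd_add psd_outer)
next
  case (Suc k)
  then have k: "k < N" and Y: "psd (state_moment A B W V z S k)" by simp_all
  have "blkAB A B ** S k ** transpose (blkAB A B)
      = (blkAB A B ** stackIF (F k)) ** state_moment A B W V z S k
        ** transpose (blkAB A B ** stackIF (F k))"
    by (simp add: dyn_feasible_factor[OF feas k] matrix_mul_assoc matrix_transpose_mul)
  also have "\<dots> = transpose (transpose (A + B ** F k)) ** state_moment A B W V z S k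
        ** transpose (A + B ** F k)"
    by (simp add: blkAB_mult_stackIF)
  finally have "psd (blkAB A B ** S k ** transpose (blkAB A B))"
    using psd_congruence[OF Y, of "transpose (A + B ** F k)"] by simp
  then show ?case using W by (simp add: psd_add)
qed

lemma stage_cost_completion:
  fixes A :: "real^'n^'n" and B :: "real^'m^'n" and X Q W Y :: "real^'n^'n"
    and R G :: "real^'m^'m" and F K :: "real^'n^'m"
  assumes "G = R + transpose B ** X ** B" and "invertible G"
    and "transpose G = G" and "transpose X = X"
    and "K = - (matrix_inv G ** transpose B ** X ** A)"
    and S: "S = stackIF F ** Y ** transpose (stackIF F)"
  shows "trace (diagblk Q R ** S) + trace (X ** (blkAB A B ** S ** transpose (blkAB A B) + W))
       = trace ((transpose A ** X ** A - transpose A ** X ** B ** matrix_inv G ** transpose B ** X ** A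
                 + Q) ** Y)
         + trace (X ** W) + trace (transpose (F - K) ** G ** (F - K) ** Y)"
proof -
  let ?L = "stackIF F" and ?M = "blkAB A B"
  have "trace (X ** (?M ** S ** transpose ?M + W))
      = trace (transpose ?M ** X ** ?M ** S) + trace (X ** W)"
    using trace_mul_sym[of "X ** ?M ** S" "transpose ?M"]
    by (simp add: matrix_add_ldistrib trace_add matrix_mul_assoc)
  moreover have "trace (diagblk Q R ** S) + trace (transpose ?M ** X ** ?M ** S)
      = trace (transpose ?L ** (diagblk Q R + transpose ?M ** X ** ?M) ** ?L ** Y)"
    using trace_mul_sym[of "(diagblk Q R + transpose ?M ** X ** ?M) ** ?L ** Y" "transpose ?L"]
    by (simp add: S matrix_add_ldistrib matrix_add_rdistrib trace_add matrix_mul_assoc)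
  ultimately show ?thesis
    by (simp add: stackIF_congruence riccati_completion_of_squares[OF assms(1-5)]
        matrix_add_rdistrib trace_add)
qed

lemma cost_completion_of_squares:
  fixes A :: "real^'n^'n" and B :: "real^'m^'n" and W V Qf :: "real^'n^'n" and z :: "real^'n"
    and Q :: "nat \<Rightarrow> real^'n^'n" and R :: "nat \<Rightarrow> real^'m^'m"
  assumes N: "1 \<le> N" and Qf: "psd Qf" and Q: "\<forall>k<N. psd (Q k)" and R: "\<forall>k<N. pd (R k)"
    and feas: "dyn_feasible A B W V z N S F"
  shows "cost A B W N Qf Q R S = trace (riccX A B N Qf Q R 0 ** (V + outer z))
      + (\<Sum>k<N. trace (riccX A B N Qf Q R (Suc k) ** W))
      + (\<Sum>k<N. trace (transpose (F k - riccF A B N Qf Q R k) ** riccG A B N Qf Q R k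
                        ** (F k - riccF A B N Qf Q R k) ** state_moment A B W V z S k))"
proof -
  let ?X = "riccX A B N Qf Q R" and ?Y = "state_moment A B W V z S"
  define to_go where "to_go k = trace (?X k ** ?Y k)" for k
  define noise where "noise k = trace (?X (Suc k) ** W)" for k
  define gap where "gap k = trace (transpose (F k - riccF A B N Qf Q R k) ** riccG A B N Qf Q R k
                        ** (F k - riccF A B N Qf Q R k) ** ?Y k)" for k
  define stage where "stage k = trace (diagblk (Q k) (R k) ** S k)" for k
  have step: "stage k + to_go (Suc k) = to_go k + noise k + gap k" if k: "k < N" for k
  proof -
    have X: "psd (?X (Suc k))" using riccX_psd[OF Qf Q R, of "Suc k"] k by simp
    have G: "pd (riccG A B N Qf Q R k)" using riccG_pd[OF Qf Q R k] .
    show ?thesis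
      using stage_cost_completion[OF riccG_def pd_invertible[OF G] _ _ riccF_def
          dyn_feasible_factor[OF feas k]] X G
      unfolding pd_def psd_def
      by (simp add: stage_def to_go_def noise_def gap_def riccX_step[OF k])
  qed
  have "(\<Sum>k<N. stage k) + (\<Sum>k<N. to_go (Suc k))
      = (\<Sum>k<N. to_go k) + (\<Sum>k<N. noise k) + (\<Sum>k<N. gap k)"
    using step by (simp add: sum.distrib[symmetric])
  moreover have "(\<Sum>k<N. to_go (Suc k)) - (\<Sum>k<N. to_go k) = to_go N - to_go 0"
    using sum_lessThan_telescope[of to_go N] by (simp add: sum_subtractf)
  moreover have "cost A B W N Qf Q R S = to_go N + (\<Sum>k<N. stage k)"
    using N by (cases N) (simp_all add: cost_def to_go_def stage_def riccX_terminal)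
  ultimately show ?thesis
    by (simp add: to_go_def noise_def gap_def)
qed

lemma riccF_minimizes_cost:
  fixes A :: "real^'n^'n" and B :: "real^'m^'n" and W V Qf :: "real^'n^'n" and z :: "real^'n"
    and Q :: "nat \<Rightarrow> real^'n^'n" and R :: "nat \<Rightarrow> real^'m^'m"
  assumes N: "1 \<le> N" and Qf: "psd Qf" and Q: "\<forall>k<N. psd (Q k)" and R: "\<forall>k<N. pd (R k)"
    and V: "psd V" and W: "psd W"
    and feas_opt: "dyn_feasible A B W V z N S\<^sub>0 F\<^sub>0"
    and F\<^sub>0: "\<forall>k<N. F\<^sub>0 k = riccF A B N Qf Q R k"
    and feas: "dyn_feasible A B W V z N S F"
  shows "cost A B W N Qf Q R S\<^sub>0 \<le> cost A B W N Qf Q R S"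
proof -
  have "0 \<le> trace (transpose (F k - riccF A B N Qf Q R k) ** riccG A B N Qf Q R k
                      ** (F k - riccF A B N Qf Q R k) ** state_moment A B W V z S k)"
    if k: "k < N" for k
  proof (rule trace_psd_mult_nonneg)
    show "psd (transpose (F k - riccF A B N Qf Q R k) ** riccG A B N Qf Q R k
                    ** (F k - riccF A B N Qf Q R k))"
      by (intro psd_congruence pd_imp_psd riccG_pd[OF Qf Q R k])
    show "psd (state_moment A B W V z S k)"
      using state_moment_psd[OF feas V W, of k] k by simp
  qed
  then have "0 \<le> (\<Sum>k<N. trace (transpose (F k - riccF A B N Qf Q R k) ** riccG A B N Qf Q R k
                      ** (F k - riccF A B N Qf Q R k) ** state_moment A B W V z S k))"
    by (intro sum_nonneg) simp
  moreover have "(\<Sum>k<N. trace (transpose (F\<^sub>0 k - riccF A B N Qf Q R k) ** riccG A B N Qf Q R k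
                      ** (F\<^sub>0 k - riccF A B N Qf Q R k) ** state_moment A B W V z S\<^sub>0 k)) = 0"
    using F\<^sub>0 by (simp add: trace_def)
  ultimately show ?thesis
    using cost_completion_of_squares[OF N Qf Q R feas]
      cost_completion_of_squares[OF N Qf Q R feas_opt] by linarith
qed

section \<open>Lagrangian relaxation\<close>

lemma diagblk_add_scaleR: "diagblk (Q + c *\<^sub>R Q') (R + c *\<^sub>R R') = diagblk Q R + c *\<^sub>R diagblk Q' R'"
  by (simp add: diagblk_def vec_eq_iff split: sum.split)

lemma cost_add_scaleR_weights:
  "cost A B W N (Qf + c *\<^sub>R Qf') (\<lambda>k. Q k + c *\<^sub>R Q' k) (\<lambda>k. R k + c *\<^sub>R R' k) S
   = cost A B W N Qf Q R S + c * cost A B W N Qf' Q' R' S"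
  unfolding cost_def
  by (simp add: diagblk_add_scaleR matrix_add_rdistrib trace_add scalar_matrix_assoc[symmetric]
      trace_scaleR sum.distrib sum_distrib_left algebra_simps)

lemma cov_optimal_if_lagrangian_minimizer:
  assumes feas_opt: "dyn_feasible A B W V z N S\<^sub>0 F\<^sub>0" and lam: "0 \<le> lam"
    and min: "\<And>S F. dyn_feasible A B W V z N S F \<Longrightarrow>
      cost A B W N Qf Q R S\<^sub>0 + lam * cost A B W N Qft Qt Rt S\<^sub>0
      \<le> cost A B W N Qf Q R S + lam * cost A B W N Qft Qt Rt S"
  shows "cov_optimal A B W V z N Qf Q R Qft Qt Rt (cost A B W N Qft Qt Rt S\<^sub>0) S\<^sub>0 F\<^sub>0"
  unfolding cov_optimal_def
proof (intro conjI allI impI order.refl feas_opt)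
  fix S F
  assume "dyn_feasible A B W V z N S F \<and> cost A B W N Qft Qt Rt S \<le> cost A B W N Qft Qt Rt S\<^sub>0"
  then show "cost A B W N Qf Q R S\<^sub>0 \<le> cost A B W N Qf Q R S"
    using min[of S F] mult_left_mono[OF _ lam] by fastforce
qed

lemma dyn_feasible_Slam_Flam:
  "dyn_feasible A B W V z N (Slam A B W V z N Qf Q R Qft Qt Rt lam) (Flam A B N Qf Q R Qft Qt Rt lam)"
  unfolding dyn_feasible_def
proof (intro conjI allI impI)
  fix k :: nat
  assume "1 \<le> k \<and> k < N"
  then obtain j where "k = Suc j" by (cases k) auto
  then show "Slam A B W V z N Qf Q R Qft Qt Rt lam k
      = Phi A B W (Flam A B N Qf Q R Qft Qt Rt lam k) (Slam A B W V z N Qf Q R Qft Qt Rt lam (k - 1))"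
    by simp
qed (simp add: Let_def)

lemma Flam_eq_riccF:
  "Flam A B N Qf Q R Qft Qt Rt lam k
   = riccF A B N (Qf + lam *\<^sub>R Qft) (\<lambda>i. Q i + lam *\<^sub>R Qt i) (\<lambda>i. R i + lam *\<^sub>R Rt i) k"
  by (simp add: Flam_def Xlam_def riccF_def riccG_def Let_def)

lemma cov_optimal_Slam_Flam:
  fixes A :: "real^'n^'n" and B :: "real^'m^'n" and W V Qf Qft :: "real^'n^'n" and z :: "real^'n"
    and Q Qt :: "nat \<Rightarrow> real^'n^'n" and R Rt :: "nat \<Rightarrow> real^'m^'m"
  assumes N: "1 \<le> N" and lam: "0 \<le> lam"
    and Qf: "psd Qf" "psd Qft" and Q: "\<forall>k<N. psd (Q k) \<and> psd (Qt k)"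
    and R: "\<forall>k<N. pd (R k + lam *\<^sub>R Rt k)" and V: "psd V" and W: "psd W"
  shows "cov_optimal A B W V z N Qf Q R Qft Qt Rt
           (cost A B W N Qft Qt Rt (Slam A B W V z N Qf Q R Qft Qt Rt lam))
           (Slam A B W V z N Qf Q R Qft Qt Rt lam) (Flam A B N Qf Q R Qft Qt Rt lam)"
proof (rule cov_optimal_if_lagrangian_minimizer[OF dyn_feasible_Slam_Flam lam])
  fix S F
  assume feas: "dyn_feasible A B W V z N S F"
  have "psd (Qf + lam *\<^sub>R Qft)" and "\<forall>k<N. psd (Q k + lam *\<^sub>R Qt k)"
    using Qf Q lam by (auto intro!: psd_add psd_scaleR)
  then have "cost A B W N (Qf + lam *\<^sub>R Qft) (\<lambda>k. Q k + lam *\<^sub>R Qt k) (\<lambda>k. R k + lam *\<^sub>R Rt k)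
               (Slam A B W V z N Qf Q R Qft Qt Rt lam)
      \<le> cost A B W N (Qf + lam *\<^sub>R Qft) (\<lambda>k. Q k + lam *\<^sub>R Qt k) (\<lambda>k. R k + lam *\<^sub>R Rt k) S"
    using R by (intro riccF_minimizes_cost[OF N _ _ _ V W dyn_feasible_Slam_Flam _ feas])
      (simp_all add: Flam_eq_riccF)
  then show "cost A B W N Qf Q R (Slam A B W V z N Qf Q R Qft Qt Rt lam)
               + lam * cost A B W N Qft Qt Rt (Slam A B W V z N Qf Q R Qft Qt Rt lam)
      \<le> cost A B W N Qf Q R S + lam * cost A B W N Qft Qt Rt S"
    by (simp only: cost_add_scaleR_weights)
qed

theorem proposition6:
  fixes A :: "real^'n^'n" and B :: "real^'m^'n"
    and W V :: "real^'n^'n" and z :: "real^'n"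
    and Qf Qft :: "real^'n^'n" and Q Qt :: "nat \<Rightarrow> real^'n^'n"
    and R Rt :: "nat \<Rightarrow> real^'m^'m"
    and N :: nat and gamma rho lam :: real
  assumes N: "1 \<le> N"
    and Qf_psd: "psd Qf" and Qft_psd: "psd Qft"
    and Q_psd: "\<forall>k<N. psd (Q k) \<and> psd (Qt k)"
    and R_pd: "\<forall>k<N. \<forall>mu>0. pd (R k + mu *\<^sub>R Rt k)"
    and V_pd: "pd V" and W_pd: "pd W"
    and slater: "\<exists>S F. dyn_feasible A B W V z N S F \<and> cost A B W N Qft Qt Rt S < gamma"
    and lam_pos: "lam > 0"
    and acc: "\<bar>cost A B W N Qft Qt Rt (Slam A B W V z N Qf Q R Qft Qt Rt lam) - gamma\<bar> \<le> rho"
  shows "let a = cost A B W N Qft Qt Rt (Slam A B W V z N Qf Q R Qft Qt Rt lam) - gamma in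
           gamma - rho \<le> gamma + a \<and> gamma + a \<le> gamma + rho \<and>
           cov_optimal A B W V z N Qf Q R Qft Qt Rt (gamma + a)
             (Slam A B W V z N Qf Q R Qft Qt Rt lam) (Flam A B N Qf Q R Qft Qt Rt lam)"
proof -
  have "cov_optimal A B W V z N Qf Q R Qft Qt Rt
          (cost A B W N Qft Qt Rt (Slam A B W V z N Qf Q R Qft Qt Rt lam))
          (Slam A B W V z N Qf Q R Qft Qt Rt lam) (Flam A B N Qf Q R Qft Qt Rt lam)"
    using R_pd lam_pos
    by (intro cov_optimal_Slam_Flam N Qf_psd Qft_psd Q_psd pd_imp_psd V_pd W_pd) auto
  then show ?thesis
    using acc by (simp add: Let_def abs_le_iff)
qed

end
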